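(* Let $\Sigma$ be a finite alphabet. If $L \subseteq \Sigma^*$ has growth $g(n)$, then $F_L(n) \in \mathcal{O}(\log g(n) + \log n)$.
   Context: The growth of $L$ is $g(n)=|\{x\in L : |x|\le n\}|$. $\log x=\lfloor\log_2 x\rfloor$. Fixed-size sliding window model: fix $a\in\Sigma$; $\mathrm{last}_n(a_1\cdots a_m)=a_{m-n+1}\cdots a_m$ if $n\le m$, else $a^{n-m}a_1\cdots a_m$. A fixed-size sliding window algorithm for $L$ is a sequence $(\mathcal{A}_n)_{n\ge0}$ of deterministic (possibly infinite-state) automata with injective encodings of their states into bit strings, $\mathcal{A}_n$ accepting $\{w:\mathrm{last}_n(w)\in L\}$; its space complexity at $n$ is the maximal encoding length of a state of $\mathcal{A}_n$. $F_L(n)$ is the minimal space complexity at $n$ over all such algorithms. *)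

theory Defs
  imports Main "HOL-Library.Discrete_Functions" "HOL-Library.Extended_Nat"
begin

definition growth :: "'a list set \<Rightarrow> nat \<Rightarrow> nat" where
  "growth L n = card {x \<in> L. length x \<le> n}"

definition last_win :: "'a \<Rightarrow> nat \<Rightarrow> 'a list \<Rightarrow> 'a list" where
  "last_win a n w = (if n \<le> length w then drop (length w - n) w
                     else replicate (n - length w) a @ w)"

record ('q, 'a) dfa =
  states :: "'q set"
  init   :: "'q"
  delta  :: "'q \<Rightarrow> 'a \<Rightarrow> 'q"
  final  :: "'q set"
  enc    :: "'q \<Rightarrow> bool list"

definition wf_dfa :: "('q, 'a) dfa \<Rightarrow> bool" where
  "wf_dfa A \<longleftrightarrow> init A \<in> states A \<and> final A \<subseteq> states A \<and>
     (\<forall>q \<in> states A. \<forall>c. delta A q c \<in> states A) \<and> inj_on (enc A) (states A)"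

definition run :: "('q, 'a) dfa \<Rightarrow> 'a list \<Rightarrow> 'q" where
  "run A w = fold (\<lambda>c q. delta A q c) w (init A)"

definition accepted :: "('q, 'a) dfa \<Rightarrow> 'a list set" where
  "accepted A = {w. run A w \<in> final A}"

definition space :: "('q, 'a) dfa \<Rightarrow> enat" where
  "space A = (SUP q \<in> states A. enat (length (enc A q)))"

text \<open>A is a valid n-th component of a fixed-size sliding window algorithm for L.\<close>
definition sw_automaton :: "'a list set \<Rightarrow> 'a \<Rightarrow> nat \<Rightarrow> ('q, 'a) dfa \<Rightarrow> bool" where
  "sw_automaton L a n A \<longleftrightarrow> wf_dfa A \<and> accepted A = {w. last_win a n w \<in> L}"

text \<open>F_L(n): minimal space complexity at n.  Since the encoding is injective into
  bit strings, the state set is countable, so states of type nat lose no generality.\<close>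
definition F_space :: "'a list set \<Rightarrow> 'a \<Rightarrow> nat \<Rightarrow> enat" where
  "F_space L a n = (INF A \<in> {A :: (nat, 'a) dfa. sw_automaton L a n A}. space A)"

end

theory Submission imports Defs "HOL-Library.Sublist" begin

text \<open>A sliding window algorithm only has to remember the longest suffix of the stream read so
  far that is a prefix of some word of \<open>L\<close> of length \<open>n\<close>. This suffix can be updated letter by
  letter, and the current window lies in \<open>L\<close> iff the suffix is itself a word of \<open>L\<close> of length \<open>n\<close>.
  There are at most \<open>(n + 1) g(n) + 1\<close> such prefixes, so numbering them in binary costs
  \<open>O(log g(n) + log n)\<close> bits.\<close>

definition longest_suffix :: "'a list set \<Rightarrow> 'a list \<Rightarrow> 'a list" where
  "longest_suffix Q z = (ARG_MAX length s. s \<in> Q \<and> suffix s z)"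

lemma
  assumes "[] \<in> Q"
  shows longest_suffix_in: "longest_suffix Q z \<in> Q"
    and suffix_longest_suffix: "suffix (longest_suffix Q z) z"
    and length_le_longest_suffix:
      "t \<in> Q \<Longrightarrow> suffix t z \<Longrightarrow> length t \<le> length (longest_suffix Q z)"
proof -
  have "\<forall>s. s \<in> Q \<and> suffix s z \<longrightarrow> length s < Suc (length z)"
    by (auto dest: suffix_length_le)
  from arg_max_nat_lemma[OF _ this, of "[]"] assms
  show "longest_suffix Q z \<in> Q" "suffix (longest_suffix Q z) z"
    "t \<in> Q \<Longrightarrow> suffix t z \<Longrightarrow> length t \<le> length (longest_suffix Q z)"
    unfolding longest_suffix_def by auto
qed

lemma suffix_same_length_eq: "suffix s z \<Longrightarrow> suffix t z \<Longrightarrow> length s = length t \<Longrightarrow> s = t"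
  by (metis suffix_length_suffix suffix_order.antisym order_refl)

lemma longest_suffix_snoc:
  assumes Nil: "[] \<in> Q" and butlast_closed: "\<And>s c. s @ [c] \<in> Q \<Longrightarrow> s \<in> Q"
  shows "longest_suffix Q (z @ [c]) = longest_suffix Q (longest_suffix Q z @ [c])"
proof -
  let ?h = "longest_suffix Q z"
  let ?t = "longest_suffix Q (z @ [c])"
  let ?u = "longest_suffix Q (?h @ [c])"
  have u_suffix: "suffix ?u (z @ [c])"
    using suffix_longest_suffix[OF Nil] by (meson suffix_append suffix_order.trans)
  have "length ?t \<le> length ?u"
  proof (cases "?t = []")
    case False
    then obtain s where s: "?t = s @ [c]" "suffix s z"
      using suffix_longest_suffix[OF Nil, of "z @ [c]"] by auto
    have "s \<in> Q" using butlast_closed longest_suffix_in[OF Nil] s(1) by metis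
    then have "length s \<le> length ?h" using length_le_longest_suffix[OF Nil] s(2) by blast
    then have "suffix s ?h" using suffix_length_suffix s(2) suffix_longest_suffix[OF Nil] by blast
    then have "suffix ?t (?h @ [c])" using s(1) by simp
    then show ?thesis using length_le_longest_suffix[OF Nil longest_suffix_in[OF Nil]] by blast
  qed simp
  moreover have "length ?u \<le> length ?t"
    using length_le_longest_suffix[OF Nil longest_suffix_in[OF Nil] u_suffix] .
  ultimately show ?thesis
    using u_suffix suffix_longest_suffix[OF Nil] suffix_same_length_eq le_antisym by metis
qed

fun bits :: "nat \<Rightarrow> bool list" where
  "bits 0 = []"
| "bits n = odd n # bits (n div 2)"

lemma inj_bits: "inj bits"
proof (rule injI)
  show "bits m = bits n \<Longrightarrow> m = n" for m n
  proof (induction m arbitrary: n rule: bits.induct)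
    case 1
    then show ?case by (cases n) auto
  next
    case (2 m)
    then obtain k where "n = Suc k" by (cases n) auto
    with 2 have "odd (Suc m) = odd n" "Suc m div 2 = n div 2" by auto
    then show ?case by (metis div_mult_mod_eq mod2_eq_if)
  qed
qed

lemma length_bits_le: "length (bits n) \<le> Suc (floor_log n)"
proof (induction n rule: bits.induct)
  case (2 m)
  show ?case
  proof (cases "m = 0")
    case False
    then show ?thesis using 2 floor_log_rec[of "Suc m"] by (simp del: floor_log_half)
  qed simp
qed simp

lemma run_snoc: "run A (w @ [c]) = delta A (run A w) c"
  by (simp add: run_def)

lemma run_in_states:
  assumes "init A \<in> states A" and "\<And>q c. q \<in> states A \<Longrightarrow> delta A q c \<in> states A"
  shows "run A w \<in> states A"
  by (induction w rule: rev_induct) (use assms in \<open>simp_all add: run_snoc, simp add: run_def\<close>)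

lemma run_simulation:
  assumes init: "init A \<in> states A" and closed: "\<And>q c. q \<in> states A \<Longrightarrow> delta A q c \<in> states A"
    and init_sim: "init B = h (init A)"
    and delta_sim: "\<And>q c. q \<in> states A \<Longrightarrow> delta B (h q) c = h (delta A q c)"
  shows "run B w = h (run A w)"
proof (induction w rule: rev_induct)
  case (snoc c w)
  then show ?case using delta_sim[OF run_in_states[OF init closed]] by (simp add: run_snoc)
qed (simp add: run_def init_sim)

text \<open>The states of \<open>A\<close> are renumbered \<open>0, 1, \<dots>\<close> and encoded by their binary expansions.\<close>

lemma F_space_le_floor_log_card:
  fixes A :: "('q, 'a) dfa"
  assumes fin: "finite (states A)" and init: "init A \<in> states A"
    and closed: "\<And>q c. q \<in> states A \<Longrightarrow> delta A q c \<in> states A"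
    and accepted: "accepted A = {w. last_win a n w \<in> L}"
  shows "F_space L a n \<le> enat (Suc (floor_log (card (states A))))"
proof -
  let ?k = "card (states A)"
  obtain idx where idx: "bij_betw idx (states A) {0..<?k}"
    using ex_bij_betw_finite_nat[OF fin] by blast
  then have inj_idx: "inj_on idx (states A)" and idx_range: "\<And>q. q \<in> states A \<Longrightarrow> idx q < ?k"
    by (auto simp: bij_betw_def)
  define B :: "(nat, 'a) dfa" where
    "B = \<lparr>states = {0..<?k}, init = idx (init A),
          delta = (\<lambda>i c. idx (delta A (inv_into (states A) idx i) c)),
          final = idx ` (final A \<inter> states A), enc = bits\<rparr>"
  have run_B: "run B w = idx (run A w)" for w
    by (rule run_simulation[OF init closed]) (simp_all add: B_def inv_into_f_f[OF inj_idx])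
  have "accepted B = accepted A"
  proof (rule set_eqI)
    fix w
    have "run A w \<in> states A" using run_in_states[OF init closed] .
    then show "w \<in> accepted B \<longleftrightarrow> w \<in> accepted A"
      unfolding accepted_def run_B by (simp add: B_def inj_on_image_mem_iff[OF inj_idx])
  qed
  moreover have "wf_dfa B"
  proof -
    have inv_idx: "inv_into (states A) idx i \<in> states A" if "i < ?k" for i
      using idx that by (simp add: bij_betw_def inv_into_into)
    show ?thesis
      unfolding wf_dfa_def B_def
      by (simp add: idx_range init closed inv_idx image_subset_iff inj_on_subset[OF inj_bits])
  qed
  ultimately have "sw_automaton L a n B" by (simp add: sw_automaton_def accepted)
  then have "F_space L a n \<le> space B" unfolding F_space_def by (rule INF_lower[OF CollectI])
  also have "space B \<le> enat (Suc (floor_log ?k))" unfolding space_def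
  proof (rule SUP_least)
    fix i assume "i \<in> states B"
    then have "floor_log i \<le> floor_log ?k" by (simp add: B_def floor_log_le_iff)
    then show "enat (length (enc B i)) \<le> enat (Suc (floor_log ?k))"
      using length_bits_le[of i] by (simp add: B_def)
  qed
  finally show ?thesis .
qed

definition window_prefixes :: "'a list set \<Rightarrow> nat \<Rightarrow> 'a list set" where
  "window_prefixes L n = insert [] (\<Union>u \<in> {u \<in> L. length u = n}. set (prefixes u))"

lemma Nil_in_window_prefixes: "[] \<in> window_prefixes L n"
  by (simp add: window_prefixes_def)

lemma window_prefixes_butlast_closed:
  "s @ [c] \<in> window_prefixes L n \<Longrightarrow> s \<in> window_prefixes L n"
  unfolding window_prefixes_def by (auto dest: append_prefixD)

lemma length_window_prefixes_le: "s \<in> window_prefixes L n \<Longrightarrow> length s \<le> n"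
  unfolding window_prefixes_def by (auto dest: prefix_length_le)

lemma finite_window_prefixes:
  fixes L :: "('a::finite) list set"
  shows "finite (window_prefixes L n)"
  by (rule finite_subset[OF _ finite_lists_length_le[OF finite_UNIV, of n]])
    (auto dest: length_window_prefixes_le)

lemma card_window_prefixes_le:
  fixes L :: "('a::finite) list set"
  shows "card (window_prefixes L n) \<le> Suc (growth L n * Suc n)"
proof -
  let ?Ln = "{u \<in> L. length u = n}"
  have fin_growth: "finite {u \<in> L. length u \<le> n}"
    by (rule finite_subset[OF _ finite_lists_length_le[OF finite_UNIV, of n]]) auto
  then have fin: "finite ?Ln" by (rule rev_finite_subset) auto
  have "card ?Ln \<le> growth L n"
    unfolding growth_def by (rule card_mono[OF fin_growth]) auto
  have "card (\<Union>u \<in> ?Ln. set (prefixes u)) \<le> (\<Sum>u \<in> ?Ln. card (set (prefixes u)))"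
    using fin by (rule card_UN_le)
  also have "\<dots> \<le> (\<Sum>u \<in> ?Ln. Suc n)"
    by (rule sum_mono) (metis (mono_tags) card_length length_prefixes mem_Collect_eq Suc_eq_plus1)
  also have "\<dots> = card ?Ln * Suc n" by simp
  also have "\<dots> \<le> growth L n * Suc n"
    using \<open>card ?Ln \<le> growth L n\<close> by (rule mult_le_mono1)
  finally show ?thesis
    using fin unfolding window_prefixes_def by (simp add: card_insert_if)
qed

text \<open>The encoding is irrelevant here: \<open>F_space_le_floor_log_card\<close> re-encodes the states.\<close>

definition window_dfa :: "'a list set \<Rightarrow> 'a \<Rightarrow> nat \<Rightarrow> ('a list, 'a) dfa" where
  "window_dfa L a n =
     \<lparr>states = window_prefixes L n,
      init = longest_suffix (window_prefixes L n) (replicate n a),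
      delta = (\<lambda>q c. longest_suffix (window_prefixes L n) (q @ [c])),
      final = {q \<in> L. length q = n}, enc = (\<lambda>_. [])\<rparr>"

lemma run_window_dfa:
  "run (window_dfa L a n) w = longest_suffix (window_prefixes L n) (replicate n a @ w)"
proof (induction w rule: rev_induct)
  case (snoc c w)
  let ?Q = "window_prefixes L n"
  have "longest_suffix ?Q ((replicate n a @ w) @ [c])
      = longest_suffix ?Q (longest_suffix ?Q (replicate n a @ w) @ [c])"
    by (rule longest_suffix_snoc, rule Nil_in_window_prefixes, erule window_prefixes_butlast_closed)
  with snoc show ?case by (simp add: run_snoc window_dfa_def)
qed (simp add: run_def window_dfa_def)

lemma longest_suffix_window_prefixes_iff:
  assumes "n \<le> length z"
  shows "longest_suffix (window_prefixes L n) z \<in> {q \<in> L. length q = n}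
    \<longleftrightarrow> drop (length z - n) z \<in> L"
    (is "?s \<in> _ \<longleftrightarrow> ?d \<in> L")
proof -
  have length_d: "length ?d = n" using assms by simp
  have s: "?s \<in> window_prefixes L n" "suffix ?s z"
    by (simp_all add: longest_suffix_in suffix_longest_suffix Nil_in_window_prefixes)
  show ?thesis
  proof
    assume s_final: "?s \<in> {q \<in> L. length q = n}"
    then have "?s = ?d" using suffix_same_length_eq[OF s(2) suffix_drop[of "length z - n" z]] length_d by simp
    with s_final show "?d \<in> L" by simp
  next
    assume "?d \<in> L"
    with length_d have "?d \<in> window_prefixes L n" unfolding window_prefixes_def by auto
    then have "length ?d \<le> length ?s"
      using length_le_longest_suffix[OF Nil_in_window_prefixes] suffix_drop by blast
    with length_d length_window_prefixes_le[OF s(1)] have "length ?s = n" by simp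
    then have "?s = ?d" using suffix_same_length_eq[OF s(2) suffix_drop[of "length z - n" z]] length_d by simp
    with \<open>?d \<in> L\<close> \<open>length ?s = n\<close> show "?s \<in> {q \<in> L. length q = n}" by simp
  qed
qed

lemma last_win_eq_drop: "last_win a n w = drop (length w) (replicate n a @ w)"
  by (simp add: last_win_def)

lemma accepted_window_dfa: "accepted (window_dfa L a n) = {w. last_win a n w \<in> L}"
proof (rule set_eqI)
  fix w
  let ?z = "replicate n a @ w"
  have "w \<in> accepted (window_dfa L a n)
      \<longleftrightarrow> longest_suffix (window_prefixes L n) ?z \<in> {q \<in> L. length q = n}"
    unfolding accepted_def run_window_dfa by (simp add: window_dfa_def)
  also have "\<dots> \<longleftrightarrow> drop (length ?z - n) ?z \<in> L"
    by (rule longest_suffix_window_prefixes_iff) simp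
  finally show "w \<in> accepted (window_dfa L a n) \<longleftrightarrow> w \<in> {w. last_win a n w \<in> L}"
    by (simp add: last_win_eq_drop)
qed

lemma F_space_le_growth:
  fixes L :: "('a::finite) list set"
  shows "F_space L a n \<le> enat (Suc (floor_log (Suc (growth L n * Suc n))))"
proof -
  let ?A = "window_dfa L a n"
  have "F_space L a n \<le> enat (Suc (floor_log (card (states ?A))))"
  proof (rule F_space_le_floor_log_card[OF _ _ _ accepted_window_dfa])
    show "finite (states ?A)"
      by (simp add: window_dfa_def finite_window_prefixes)
  qed (simp_all add: window_dfa_def longest_suffix_in Nil_in_window_prefixes)
  also have "\<dots> \<le> enat (Suc (floor_log (Suc (growth L n * Suc n))))"
    using card_window_prefixes_le[of L n] by (simp add: window_dfa_def floor_log_le_iff)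
  finally show ?thesis .
qed

lemma floor_log_mult_le:
  assumes "0 < m" "0 < n"
  shows "floor_log (m * n) \<le> Suc (floor_log m + floor_log n)"
proof -
  have "(2::nat) ^ floor_log (m * n) \<le> m * n"
    using assms by (simp add: floor_log_exp2_le)
  also have "\<dots> < (2 * 2 ^ floor_log m) * (2 * 2 ^ floor_log n)"
    by (intro mult_strict_mono floor_log_exp2_gt) simp_all
  also have "\<dots> = 2 ^ Suc (Suc (floor_log m + floor_log n))"
    by (simp add: power_add)
  finally have "floor_log (m * n) < Suc (Suc (floor_log m + floor_log n))"
    by (rule power_less_imp_less_exp[rotated]) simp
  then show ?thesis by simp
qed

lemma floor_log_window_bound:
  fixes G n :: nat
  assumes "2 \<le> n"
  shows "Suc (floor_log (Suc (G * Suc n))) \<le> 4 * (floor_log G + floor_log n)"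
proof -
  define G' where "G' = max G 1"
  have "Suc (G * Suc n) \<le> 2 * (n * G')"
  proof (cases "G = 0")
    case False
    have "G + 1 \<le> 2 * G" using False by simp
    also have "\<dots> \<le> n * G" using assms by (rule mult_le_mono1)
    finally show ?thesis using False by (simp add: G'_def mult.commute)
  qed (use assms in \<open>simp add: G'_def\<close>)
  then have "floor_log (Suc (G * Suc n)) \<le> Suc (floor_log (n * G'))"
    using assms floor_log_le_iff by (fastforce simp: G'_def)
  also have "\<dots> \<le> Suc (Suc (floor_log n + floor_log G'))"
    using assms floor_log_mult_le[of n G'] by (simp add: G'_def)
  also have "floor_log G' = floor_log G"
    by (cases G) (simp_all add: G'_def)
  moreover have "1 \<le> floor_log n"
    using floor_log_le_iff[OF assms] floor_log_twice[of 1] by simp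
  ultimately show ?thesis unfolding distrib_left by linarith
qed

theorem theorem4p3:
  fixes L :: "('a::finite) list set" and a :: 'a
  shows "\<exists>c N. \<forall>n \<ge> N.
           F_space L a n \<le> enat (c * (floor_log (growth L n) + floor_log n))"
proof -
  have "F_space L a n \<le> enat (4 * (floor_log (growth L n) + floor_log n))" if "2 \<le> n" for n
  proof -
    have "F_space L a n \<le> enat (Suc (floor_log (Suc (growth L n * Suc n))))"
      by (rule F_space_le_growth)
    also have "\<dots> \<le> enat (4 * (floor_log (growth L n) + floor_log n))"
      using floor_log_window_bound[OF that] by simp
    finally show ?thesis .
  qed
  then show ?thesis by blast
qed

end
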